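(* Let $Y,X$ be locally compact Hausdorff spaces, $r\colon Y\to X$ continuous, and $\Lambda\colon C_c(Y)\to C_c(X)$ a positive linear map. Then $\Lambda(f)(x)=0$ for all $f\in C_c(Y)$ and $x\in X$ with $f|_{r^{-1}(x)}=0$ if and only if $\Lambda(f\cdot(g\circ r))=\Lambda(f)g$ for all $f\in C_c(Y)$ and $g\in C_c(X)$. *)

theory Defs
  imports "HOL-Analysis.Analysis"
begin

text \<open>Functions are required to vanish outside the carrier (topspace X), so that each element
  of C_c(X) has a unique representative.\<close>
definition Cc :: "'a topology \<Rightarrow> ('a \<Rightarrow> complex) set" where
  "Cc X = {f. continuous_map X euclidean f
              \<and> compactin X (X closure_of {x \<in> topspace X. f x \<noteq> 0})
              \<and> (\<forall>x. x \<notin> topspace X \<longrightarrow> f x = 0)}"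

definition nonneg_fun :: "('a \<Rightarrow> complex) \<Rightarrow> bool" where
  "nonneg_fun f \<longleftrightarrow> (\<forall>x. Im (f x) = 0 \<and> 0 \<le> Re (f x))"

definition positive_linear_Cc ::
  "'b topology \<Rightarrow> 'a topology \<Rightarrow> (('b \<Rightarrow> complex) \<Rightarrow> ('a \<Rightarrow> complex)) \<Rightarrow> bool" where
  "positive_linear_Cc Y X L \<longleftrightarrow>
     (\<forall>f\<in>Cc Y. L f \<in> Cc X)
   \<and> (\<forall>f\<in>Cc Y. \<forall>g\<in>Cc Y. L (\<lambda>y. f y + g y) = (\<lambda>x. L f x + L g x))
   \<and> (\<forall>c. \<forall>f\<in>Cc Y. L (\<lambda>y. c * f y) = (\<lambda>x. c * L f x))
   \<and> (\<forall>f\<in>Cc Y. nonneg_fun f \<longrightarrow> nonneg_fun (L f))"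

end

theory Submission
  imports Defs
begin

text \<open>
  If \<open>\<Lambda>\<close> is \<open>C\<^sub>c(X)\<close>-linear, a function \<open>f\<close> vanishing on the fibre \<open>r\<^sup>-\<^sup>1(x)\<close> can be
  approximated uniformly, up to \<open>\<epsilon>\<close>, by \<open>f \<cdot> (1 - g \<circ> r)\<close> where \<open>g\<close> is an Urysohn function equal
  to \<open>1\<close> on the compact set \<open>r({|f| \<ge> \<epsilon>})\<close> and vanishing at \<open>x\<close>; linearity gives
  \<open>\<Lambda>(f)(x) = \<Lambda>(f \<cdot> (1 - g \<circ> r))(x)\<close>, and positivity bounds the latter by \<open>2\<epsilon> \<Lambda>(\<phi>)(x)\<close> for a
  fixed cutoff \<open>\<phi>\<close> that is \<open>1\<close> on the support of \<open>f\<close>. Conversely, \<open>f \<cdot> (g \<circ> r) - g(x) f\<close>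
  vanishes on \<open>r\<^sup>-\<^sup>1(x)\<close>.
\<close>

lemma continuous_map_mult:
  fixes f g :: "'a \<Rightarrow> 'b::real_normed_algebra"
  shows "\<lbrakk>continuous_map X euclidean f; continuous_map X euclidean g\<rbrakk>
    \<Longrightarrow> continuous_map X euclidean (\<lambda>x. f x * g x)"
  by (simp add: continuous_map_atin tendsto_mult)

lemma continuous_map_Re:
  "continuous_map X euclidean f \<Longrightarrow> continuous_map X euclideanreal (\<lambda>x. Re (f x))"
  by (simp add: continuous_map_atin tendsto_Re)

lemma continuous_map_Im:
  "continuous_map X euclidean f \<Longrightarrow> continuous_map X euclideanreal (\<lambda>x. Im (f x))"
  by (simp add: continuous_map_atin tendsto_Im)

lemma continuous_map_of_real:
  "continuous_map X euclideanreal f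
    \<Longrightarrow> continuous_map X euclidean (\<lambda>x. of_real (f x) :: 'b::real_normed_algebra_1)"
  by (simp add: continuous_map_atin tendsto_of_real)

text \<open>Urysohn's lemma is applied inside a compact neighbourhood \<open>L\<close> of \<open>K\<close>, which is normal, and the
  result is extended by zero; the extension is continuous because it vanishes on the frontier of \<open>L\<close>.\<close>

lemma Urysohn_compact_support:
  assumes "locally_compact_space X" and "Hausdorff_space X"
    and "compactin X K" and "openin X W" and "K \<subseteq> W"
  obtains f :: "'a \<Rightarrow> real" where "continuous_map X euclideanreal f"
    "\<And>x. 0 \<le> f x" "\<And>x. f x \<le> 1" "\<And>x. x \<in> K \<Longrightarrow> f x = 1" "\<And>x. x \<notin> W \<Longrightarrow> f x = 0"
    "compactin X (X closure_of {x \<in> topspace X. f x \<noteq> 0})"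
proof -
  have "locally_compact_space (subtopology X W)" "Hausdorff_space (subtopology X W)"
    using assms locally_compact_space_open_subset Hausdorff_space_subtopology by blast+
  moreover have "compactin (subtopology X W) K"
    using assms by (simp add: compactin_subtopology)
  ultimately obtain U L where U': "openin (subtopology X W) U" and L': "compactin (subtopology X W) L"
      and KUL: "K \<subseteq> U" "U \<subseteq> L"
    by (meson locally_compact_space_compact_closed_compact)
  have U: "openin X U"
    using U' assms(4) openin_open_subtopology by blast
  have L: "compactin X L" "L \<subseteq> W"
    using L' by (auto simp: compactin_subtopology)
  have LC: "closedin X L" and KC: "closedin X K"
    using assms(2,3) L compactin_imp_closedin by blast+
  have "normal_space (subtopology X L)"
    using assms(2) L Hausdorff_space_subtopology compact_Hausdorff_or_regular_imp_normal_space
      compact_space_subtopology by blast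
  moreover have "closedin (subtopology X L) K"
    using KC KUL closedin_subset_topspace by blast
  moreover have "closedin (subtopology X L) (L - U)"
    using LC U by (simp add: closedin_subset_topspace closedin_diff)
  moreover have "disjnt (L - U) K"
    using KUL by (auto simp: disjnt_def)
  ultimately obtain g :: "'a \<Rightarrow> real"
    where g: "continuous_map (subtopology X L) (top_of_set {0..1}) g"
      "g ` (L - U) \<subseteq> {0}" "g ` K \<subseteq> {1}"
    using Urysohn_lemma [of "subtopology X L" "L - U" K 0 1] by auto
  have gL: "continuous_map (subtopology X (X closure_of {x. x \<in> L})) euclideanreal g"
    using g(1) LC by (simp add: closure_of_closedin continuous_map_in_subtopology)
  have g01: "g x \<in> {0..1}" if "x \<in> L" for x
    using g(1) that closedin_subset[OF LC] by (auto simp: continuous_map_def)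
  have "X frontier_of L \<subseteq> L - U"
    using closure_of_closedin[OF LC] interior_of_maximal[OF KUL(2) U]
    unfolding frontier_of_def by blast
  then have g0: "g x = 0" if "x \<in> X frontier_of {x. x \<in> L}" for x
    using g(2) that by auto
  define f where "f x = (if x \<in> L then g x else 0)" for x
  show ?thesis
  proof
    show "continuous_map X euclideanreal f"
      unfolding f_def by (rule continuous_map_cases [OF gL _ g0]) simp
    show "\<And>x. 0 \<le> f x" "\<And>x. f x \<le> 1"
      using g01 by (auto simp: f_def)
    show "\<And>x. x \<in> K \<Longrightarrow> f x = 1" "\<And>x. x \<notin> W \<Longrightarrow> f x = 0"
      using g(3) KUL L by (auto simp: f_def)
    have "X closure_of {x \<in> topspace X. f x \<noteq> 0} \<subseteq> L"
      by (rule closure_of_minimal [OF _ LC]) (auto simp: f_def)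
    then show "compactin X (X closure_of {x \<in> topspace X. f x \<noteq> 0})"
      using closed_compactin L(1) closedin_closure_of by blast
  qed
qed

lemma Cc_if_vanishes_with:
  assumes "f \<in> Cc X" and "continuous_map X euclidean g" and "\<And>x. f x = 0 \<Longrightarrow> g x = 0"
  shows "g \<in> Cc X"
proof -
  have "{x \<in> topspace X. g x \<noteq> 0} \<subseteq> {x \<in> topspace X. f x \<noteq> 0}"
    using assms(3) by blast
  then have "X closure_of {x \<in> topspace X. g x \<noteq> 0} \<subseteq> X closure_of {x \<in> topspace X. f x \<noteq> 0}"
    by (rule closure_of_mono)
  moreover have "compactin X (X closure_of {x \<in> topspace X. f x \<noteq> 0})"
    using assms(1) by (simp add: Cc_def)
  ultimately have "compactin X (X closure_of {x \<in> topspace X. g x \<noteq> 0})"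
    by (meson closed_compactin closedin_closure_of)
  then show ?thesis
    using assms unfolding Cc_def by auto
qed
lemma Cc_add:
  assumes "f \<in> Cc X" and "g \<in> Cc X"
  shows "(\<lambda>x. f x + g x) \<in> Cc X"
proof -
  have "X closure_of {x \<in> topspace X. f x + g x \<noteq> 0}
      \<subseteq> X closure_of ({x \<in> topspace X. f x \<noteq> 0} \<union> {x \<in> topspace X. g x \<noteq> 0})"
    by (rule closure_of_mono) auto
  moreover have "compactin X (X closure_of ({x \<in> topspace X. f x \<noteq> 0} \<union> {x \<in> topspace X. g x \<noteq> 0}))"
    using assms by (simp add: Cc_def closure_of_Un compactin_Un)
  ultimately have "compactin X (X closure_of {x \<in> topspace X. f x + g x \<noteq> 0})"
    by (meson closed_compactin closedin_closure_of)
  then show ?thesis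
    using assms by (simp add: Cc_def continuous_map_add)
qed

lemma Cc_scale:
  assumes "f \<in> Cc X"
  shows "(\<lambda>x. c * f x) \<in> Cc X"
proof (rule Cc_if_vanishes_with [OF assms])
  show "continuous_map X euclidean (\<lambda>x. c * f x)"
    using assms by (simp add: Cc_def continuous_map_mult)
qed simp

lemma Cc_lincomb:
  assumes "f \<in> Cc X" and "g \<in> Cc X"
  shows "(\<lambda>x. a * f x - b * g x) \<in> Cc X"
  using Cc_add [OF Cc_scale [OF assms(1)] Cc_scale [OF assms(2)], of a "- b"] by simp

lemma Cc_mult_comp:
  assumes "f \<in> Cc Y" and "continuous_map X euclidean g" and "continuous_map Y X r"
  shows "(\<lambda>y. f y * g (r y)) \<in> Cc Y"
proof (rule Cc_if_vanishes_with [OF assms(1)])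
  have "continuous_map Y euclidean (g \<circ> r)"
    using assms(2,3) continuous_map_compose by blast
  then show "continuous_map Y euclidean (\<lambda>y. f y * g (r y))"
    using assms(1) by (auto simp: Cc_def o_def intro: continuous_map_mult)
qed auto

lemma Cc_of_real:
  assumes "continuous_map X euclideanreal f"
    and "compactin X (X closure_of {x \<in> topspace X. f x \<noteq> 0})"
    and "\<And>x. x \<notin> topspace X \<Longrightarrow> f x = 0"
  shows "(\<lambda>x. complex_of_real (f x)) \<in> Cc X"
  using assms by (auto simp: Cc_def intro: continuous_map_of_real)

lemma positive_linear_CcD:
  assumes "positive_linear_Cc Y X L" and "f \<in> Cc Y"
  shows positive_linear_Cc_in_Cc: "L f \<in> Cc X"
    and positive_linear_Cc_nonneg: "nonneg_fun f \<Longrightarrow> nonneg_fun (L f)"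
    and positive_linear_Cc_lincomb:
      "g \<in> Cc Y \<Longrightarrow> L (\<lambda>y. a * f y - b * g y) = (\<lambda>x. a * L f x - b * L g x)"
proof -
  show "L f \<in> Cc X" "nonneg_fun f \<Longrightarrow> nonneg_fun (L f)"
    using assms unfolding positive_linear_Cc_def by blast+
  have add: "\<And>f g. f \<in> Cc Y \<Longrightarrow> g \<in> Cc Y \<Longrightarrow> L (\<lambda>y. f y + g y) = (\<lambda>x. L f x + L g x)"
    and scale: "\<And>c f. f \<in> Cc Y \<Longrightarrow> L (\<lambda>y. c * f y) = (\<lambda>x. c * L f x)"
    using assms(1) unfolding positive_linear_Cc_def by blast+
  assume g: "g \<in> Cc Y"
  have "L (\<lambda>y. a * f y - b * g y) = L (\<lambda>y. a * f y + (- b) * g y)"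
    by simp
  also have "\<dots> = (\<lambda>x. L (\<lambda>y. a * f y) x + L (\<lambda>y. (- b) * g y) x)"
    by (rule add [OF Cc_scale [OF assms(2)] Cc_scale [OF g]])
  also have "\<dots> = (\<lambda>x. a * L f x - b * L g x)"
    unfolding scale [OF assms(2)] scale [OF g] by simp
  finally show "L (\<lambda>y. a * f y - b * g y) = (\<lambda>x. a * L f x - b * L g x)" .
qed

lemma positive_linear_Cc_real_bound:
  assumes L: "positive_linear_Cc Y X L" and u: "u \<in> Cc Y" and \<phi>: "\<phi> \<in> Cc Y" "nonneg_fun \<phi>"
    and u_real: "\<And>y. Im (u y) = 0" and u_le: "\<And>y. \<bar>Re (u y)\<bar> \<le> e * Re (\<phi> y)"
  shows "norm (L u x) \<le> e * Re (L \<phi> x)"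
proof -
  have "nonneg_fun (\<lambda>x. of_real e * L \<phi> x - c * L u x)" if "c = 1 \<or> c = -1" for c
  proof -
    have "nonneg_fun (\<lambda>y. of_real e * \<phi> y - c * u y)"
      using \<phi>(2) u_real u_le that by (auto simp: nonneg_fun_def abs_le_iff)
    then have "nonneg_fun (L (\<lambda>y. of_real e * \<phi> y - c * u y))"
      using positive_linear_Cc_nonneg [OF L Cc_lincomb [OF \<phi>(1) u]] by blast
    then show ?thesis
      by (simp only: positive_linear_Cc_lincomb [OF L \<phi>(1) u])
  qed
  then have pm: "Im (of_real e * L \<phi> x - c * L u x) = 0" "0 \<le> Re (of_real e * L \<phi> x - c * L u x)"
    if "c = 1 \<or> c = -1" for c
    using that unfolding nonneg_fun_def by blast+
  have "Im (L \<phi> x) = 0"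
    using positive_linear_Cc_nonneg [OF L \<phi>] by (simp add: nonneg_fun_def)
  then have "Im (L u x) = 0"
    using pm(1) [of 1] by simp
  moreover have "\<bar>Re (L u x)\<bar> \<le> e * Re (L \<phi> x)"
    using pm(2) [of 1] pm(2) [of "-1"] by (simp add: abs_le_iff)
  ultimately show ?thesis
    by (simp add: cmod_eq_Re)
qed

lemma positive_linear_Cc_norm_bound:
  assumes L: "positive_linear_Cc Y X L" and h: "h \<in> Cc Y" and \<phi>: "\<phi> \<in> Cc Y" "nonneg_fun \<phi>"
    and h_le: "\<And>y. norm (h y) \<le> e * Re (\<phi> y)"
  shows "norm (L h x) \<le> 2 * e * Re (L \<phi> x)"
proof -
  define u where "u y = complex_of_real (Re (h y))" for y
  define v where "v y = complex_of_real (Im (h y))" for y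
  have "continuous_map Y euclidean h"
    using h by (simp add: Cc_def)
  then have u: "u \<in> Cc Y" and v: "v \<in> Cc Y"
    unfolding u_def v_def
    by (auto intro!: Cc_if_vanishes_with [OF h] continuous_map_of_real continuous_map_Re continuous_map_Im)
  have "norm (L u x) \<le> e * Re (L \<phi> x)"
    using positive_linear_Cc_real_bound [OF L u \<phi>] abs_Re_le_cmod h_le order_trans
    by (fastforce simp: u_def)
  moreover have "norm (L v x) \<le> e * Re (L \<phi> x)"
    using positive_linear_Cc_real_bound [OF L v \<phi>] abs_Im_le_cmod h_le order_trans
    by (fastforce simp: v_def)
  moreover have "L h x = 1 * L u x - (- \<i>) * L v x"
  proof -
    have "h = (\<lambda>y. 1 * u y - (- \<i>) * v y)"
      by (auto simp: u_def v_def complex_eq_iff)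
    then show ?thesis
      by (simp only: positive_linear_Cc_lincomb [OF L u v])
  qed
  then have "norm (L h x) \<le> norm (L u x) + norm (L v x)"
    using norm_triangle_ineq [of "L u x" "\<i> * L v x"] by (simp add: norm_mult)
  ultimately show ?thesis
    by linarith
qed

lemma nonpos_if_le_all_pos_mult:
  fixes a c :: real
  assumes "\<And>e. 0 < e \<Longrightarrow> a \<le> e * c"
  shows "a \<le> 0"
proof (cases "c \<le> 0")
  case True
  then show ?thesis
    using assms [of 1] by simp
next
  case False
  show ?thesis
  proof (rule field_le_epsilon)
    fix d :: real
    assume "0 < d"
    then show "a \<le> 0 + d"
      using assms [of "d / c"] False by simp
  qed
qed

lemma vanishing_on_fibres_imp_multiplicative:
  assumes L: "positive_linear_Cc Y X L" and r: "continuous_map Y X r"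
    and vanish: "\<And>f x. \<lbrakk>f \<in> Cc Y; x \<in> topspace X; \<And>y. \<lbrakk>y \<in> topspace Y; r y = x\<rbrakk> \<Longrightarrow> f y = 0\<rbrakk>
      \<Longrightarrow> L f x = 0"
    and f: "f \<in> Cc Y" and g: "g \<in> Cc X"
  shows "L (\<lambda>y. f y * g (r y)) = (\<lambda>x. L f x * g x)"
proof
  fix x
  have fg: "(\<lambda>y. f y * g (r y)) \<in> Cc Y"
    using Cc_mult_comp [OF f _ r] g by (simp add: Cc_def)
  show "L (\<lambda>y. f y * g (r y)) x = L f x * g x"
  proof (cases "x \<in> topspace X")
    case True
    have "L (\<lambda>y. 1 * (f y * g (r y)) - g x * f y) x = 0"
      using True by (intro vanish Cc_lincomb fg f) auto
    then show ?thesis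
      unfolding positive_linear_Cc_lincomb [OF L fg f] by (simp add: mult.commute)
  next
    case False
    then show ?thesis
      using positive_linear_Cc_in_Cc [OF L fg] g by (simp add: Cc_def)
  qed
qed

lemma approximate_away_from_fibre:
  assumes "locally_compact_space X" and "Hausdorff_space X" and r: "continuous_map Y X r"
    and f: "f \<in> Cc Y" and x: "x \<in> topspace X"
    and vanish: "\<And>y. \<lbrakk>y \<in> topspace Y; r y = x\<rbrakk> \<Longrightarrow> f y = 0" and "0 < e"
  obtains g where "g \<in> Cc X" "g x = 0" "\<And>y. norm (f y - f y * g (r y)) \<le> e"
proof -
  define C where "C = {y \<in> topspace Y. norm (f y) \<in> {e..}}"
  have "continuous_map Y euclidean f"
    using f by (simp add: Cc_def)
  then have "closedin Y C"
    unfolding C_def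
    by (rule closedin_continuous_map_preimage [OF continuous_map_norm])
      (use closed_atLeast closed_closedin in blast)
  moreover have "C \<subseteq> Y closure_of {y \<in> topspace Y. f y \<noteq> 0}"
    unfolding C_def using \<open>0 < e\<close> by (auto intro!: closure_of_subset [THEN subsetD])
  ultimately have "compactin Y C"
    using f closed_compactin by (auto simp: Cc_def)
  then have rC: "compactin X (r ` C)"
    using image_compactin r by blast
  have W: "openin X (topspace X - {x})"
    using assms(2) x by (simp add: Hausdorff_imp_t1_space closedin_t1_singleton openin_diff)
  have rCW: "r ` C \<subseteq> topspace X - {x}"
    using vanish \<open>0 < e\<close> continuous_map_image_subset_topspace [OF r] by (fastforce simp: C_def)
  obtain \<gamma> where \<gamma>: "continuous_map X euclideanreal \<gamma>"
      "\<And>z. 0 \<le> \<gamma> z" "\<And>z. \<gamma> z \<le> 1" "\<And>z. z \<in> r ` C \<Longrightarrow> \<gamma> z = 1"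
      "\<And>z. z \<notin> topspace X - {x} \<Longrightarrow> \<gamma> z = 0"
      "compactin X (X closure_of {z \<in> topspace X. \<gamma> z \<noteq> 0})"
    by (fact Urysohn_compact_support [OF assms(1,2) rC W rCW])
  show ?thesis
  proof
    show "(\<lambda>z. complex_of_real (\<gamma> z)) \<in> Cc X"
      by (rule Cc_of_real [OF \<gamma>(1,6)]) (use \<gamma>(5) in simp)
    show "complex_of_real (\<gamma> x) = 0"
      using \<gamma>(5) by simp
    fix y
    have "norm (f y - f y * complex_of_real (\<gamma> (r y))) = norm (f y) * \<bar>1 - \<gamma> (r y)\<bar>"
    proof -
      have "f y - f y * complex_of_real (\<gamma> (r y)) = f y * complex_of_real (1 - \<gamma> (r y))"
        by (simp add: algebra_simps)
      then show ?thesis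
        by (simp only: norm_mult norm_of_real)
    qed
    also have "\<dots> \<le> e"
    proof (cases "y \<in> C")
      case True
      then show ?thesis
        using \<gamma>(4) \<open>0 < e\<close> by simp
    next
      case False
      then have "norm (f y) \<le> e"
        using f \<open>0 < e\<close> by (auto simp: C_def Cc_def)
      then show ?thesis
        using \<gamma>(2,3) [of "r y"] by (simp add: mult_le_one mult_left_le order_trans [OF mult_left_le])
    qed
    finally show "norm (f y - f y * complex_of_real (\<gamma> (r y))) \<le> e" .
  qed
qed

lemma multiplicative_imp_vanishing_on_fibres:
  assumes "locally_compact_space Y" and "Hausdorff_space Y"
    and "locally_compact_space X" and "Hausdorff_space X"
    and r: "continuous_map Y X r" and L: "positive_linear_Cc Y X L"
    and mult: "\<And>f g. \<lbrakk>f \<in> Cc Y; g \<in> Cc X\<rbrakk> \<Longrightarrow> L (\<lambda>y. f y * g (r y)) = (\<lambda>x. L f x * g x)"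
    and f: "f \<in> Cc Y" and x: "x \<in> topspace X"
    and vanish: "\<And>y. \<lbrakk>y \<in> topspace Y; r y = x\<rbrakk> \<Longrightarrow> f y = 0"
  shows "L f x = 0"
proof -
  define S where "S = Y closure_of {y \<in> topspace Y. f y \<noteq> 0}"
  have S: "compactin Y S" "S \<subseteq> topspace Y"
    using f closure_of_subset_topspace by (simp_all add: S_def Cc_def)
  obtain \<rho> where \<rho>: "continuous_map Y euclideanreal \<rho>"
      "\<And>y. 0 \<le> \<rho> y" "\<And>y. \<rho> y \<le> 1" "\<And>y. y \<in> S \<Longrightarrow> \<rho> y = 1"
      "\<And>y. y \<notin> topspace Y \<Longrightarrow> \<rho> y = 0"
      "compactin Y (Y closure_of {y \<in> topspace Y. \<rho> y \<noteq> 0})"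
    by (fact Urysohn_compact_support [OF assms(1,2) S(1) openin_topspace S(2)])
  define \<phi> where "\<phi> y = complex_of_real (\<rho> y)" for y
  have \<phi>: "\<phi> \<in> Cc Y" "nonneg_fun \<phi>"
    unfolding \<phi>_def using Cc_of_real [OF \<rho>(1,6,5)] \<rho>(2) by (simp_all add: nonneg_fun_def)
  have "norm (L f x) \<le> e * (2 * Re (L \<phi> x))" if "0 < e" for e
  proof -
    obtain g where g: "g \<in> Cc X" "g x = 0" "\<And>y. norm (f y - f y * g (r y)) \<le> e"
      using approximate_away_from_fibre [OF assms(3,4) r f x vanish \<open>0 < e\<close>] by blast
    have fg: "(\<lambda>y. f y * g (r y)) \<in> Cc Y"
      using Cc_mult_comp [OF f _ r] g(1) by (simp add: Cc_def)
    have "L (\<lambda>y. 1 * f y - 1 * (f y * g (r y))) x = L f x"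
      unfolding positive_linear_Cc_lincomb [OF L f fg] mult [OF f g(1)] using g(2) by simp
    moreover have "norm (1 * f y - 1 * (f y * g (r y))) \<le> e * Re (\<phi> y)" for y
    proof (cases "f y = 0")
      case False
      then have "y \<in> S"
        using f by (auto simp: S_def Cc_def intro: closure_of_subset [THEN subsetD])
      then show ?thesis
        using g(3) [of y] \<rho>(4) by (simp add: \<phi>_def)
    qed (use \<rho>(2) \<open>0 < e\<close> in \<open>simp add: \<phi>_def\<close>)
    ultimately have "norm (L f x) \<le> 2 * e * Re (L \<phi> x)"
      using positive_linear_Cc_norm_bound [OF L Cc_lincomb [OF f fg, of 1 1] \<phi>, where e = e and x = x]
      by simp
    then show ?thesis
      by (simp add: ac_simps)
  qed
  then have "norm (L f x) \<le> 0"
    by (rule nonpos_if_le_all_pos_mult)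
  then show ?thesis
    by simp
qed

theorem lemma2p1:
  fixes Y :: "'b topology" and X :: "'a topology"
    and r :: "'b \<Rightarrow> 'a" and L :: "('b \<Rightarrow> complex) \<Rightarrow> ('a \<Rightarrow> complex)"
  assumes "locally_compact_space Y" and "Hausdorff_space Y"
    and "locally_compact_space X" and "Hausdorff_space X"
    and "continuous_map Y X r"
    and "positive_linear_Cc Y X L"
  shows "(\<forall>f\<in>Cc Y. \<forall>x\<in>topspace X.
            (\<forall>y\<in>topspace Y. r y = x \<longrightarrow> f y = 0) \<longrightarrow> L f x = 0)
     \<longleftrightarrow> (\<forall>f\<in>Cc Y. \<forall>g\<in>Cc X. L (\<lambda>y. f y * g (r y)) = (\<lambda>x. L f x * g x))"
proof
  assume "\<forall>f\<in>Cc Y. \<forall>x\<in>topspace X. (\<forall>y\<in>topspace Y. r y = x \<longrightarrow> f y = 0) \<longrightarrow> L f x = 0"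
  then show "\<forall>f\<in>Cc Y. \<forall>g\<in>Cc X. L (\<lambda>y. f y * g (r y)) = (\<lambda>x. L f x * g x)"
    by (intro ballI vanishing_on_fibres_imp_multiplicative [OF assms(6,5)]) auto
next
  assume "\<forall>f\<in>Cc Y. \<forall>g\<in>Cc X. L (\<lambda>y. f y * g (r y)) = (\<lambda>x. L f x * g x)"
  then show "\<forall>f\<in>Cc Y. \<forall>x\<in>topspace X. (\<forall>y\<in>topspace Y. r y = x \<longrightarrow> f y = 0) \<longrightarrow> L f x = 0"
    by (intro ballI impI multiplicative_imp_vanishing_on_fibres [OF assms]) auto
qed

end
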